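(* For every strategy profile $s$: if $\mathsf{SPE}(s)$ then $\mathsf{Nash}(s)$.
   Context: Let $P=\{A,B\}$ and $\mathrm{Choice}=\{d,r\}$; a payoff function is $f:P\to\mathbb{R}$. Strategy profiles are elements of the final coalgebra of $X\mapsto\mathbb{R}^P+P\times\mathrm{Choice}\times X\times X$ (finite or infinite trees $\langle f\rangle$ or $\langle p,c,s_d,s_r\rangle$); $\sim_s$ denotes bisimilarity of profiles. The payoff $\widehat{s}$ is the partial function given by $\widehat{\langle f\rangle}=f$, $\widehat{\langle p,d,s_d,s_r\rangle}=\widehat{s_d}$, $\widehat{\langle p,r,s_d,s_r\rangle}=\widehat{s_r}$ (undefined if the unfolding does not terminate). Convergence $\downarrow$: least predicate with $\downarrow(s)$ iff $s=\langle f\rangle$, or $s=\langle p,d,s_d,s_r\rangle\wedge\downarrow(s_d)$, or $s=\langle p,r,s_d,s_r\rangle\wedge\downarrow(s_r)$. Strong convergence $\Downarrow$: greatest predicate with $\Downarrow(s)$ iff $s=\langle f\rangle$, or $s=\langle p,c,s_d,s_r\rangle$ with $\downarrow(s),\Downarrow(s_d),\Downarrow(s_r)$. For a predicate $\Phi$, $\Box\Phi$ is the greatest predicate such that $\Box\Phi(s)$ iff $\Phi(s)$ and, whenever $s=\langle p,c,s_d,s_r\rangle$, $\Box\Phi(s_d)$ and $\Box\Phi(s_r)$. $\mathsf{PE}(s)$ holds iff $\Downarrow(s)$ and (if $s=\langle p,d,s_d,s_r\rangle$ then $\widehat{s_d}(p)\ge\widehat{s_r}(p)$) and (if $s=\langle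 p,r,s_d,s_r\rangle$ then $\widehat{s_r}(p)\ge\widehat{s_d}(p)$); $\mathsf{SPE}=\Box\,\mathsf{PE}$. For an agent $p$, the convertibility relation $\vdash_p\dashv$ is the least (inductively defined) relation such that: if $s\sim_s s'$ then $s\vdash_p\dashv s'$; if $s_1\vdash_p\dashv s_1'$ and $s_2\vdash_p\dashv s_2'$ then $\langle p,c,s_1,s_2\rangle\vdash_p\dashv\langle p,c',s_1',s_2'\rangle$ for any $c,c'\in\mathrm{Choice}$; and if $s_1\vdash_p\dashv s_1'$ and $s_2\vdash_p\dashv s_2'$ then $\langle p',c,s_1,s_2\rangle\vdash_p\dashv\langle p',c,s_1',s_2'\rangle$ for any agent $p'$ and $c\in\mathrm{Choice}$. $\mathsf{Nash}(s)$ means: for every agent $p$ and every profile $s'$ with $s\vdash_p\dashv s'$, the payoffs $\widehat{s}(p)$ and $\widehat{s'}(p)$ are defined and $\widehat{s}(p)\ge\widehat{s'}(p)$. *)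

theory Defs
  imports Complex_Main
begin

datatype agent = A | B
datatype choice = d | r

type_synonym payoff_fun = "agent \<Rightarrow> real"

codatatype strat = Leaf payoff_fun | Node agent choice strat strat

coinductive bisim :: "strat \<Rightarrow> strat \<Rightarrow> bool" where
  bisim_leaf: "bisim (Leaf f) (Leaf f)"
| bisim_node: "bisim s1 s1' \<Longrightarrow> bisim s2 s2' \<Longrightarrow> bisim (Node p c s1 s2) (Node p c s1' s2')"

text \<open>Graph of the partial payoff function: payoff_rel s f iff the unfolding of s terminates with payoff f.\<close>
inductive payoff_rel :: "strat \<Rightarrow> payoff_fun \<Rightarrow> bool" where
  "payoff_rel (Leaf f) f"
| "payoff_rel sd f \<Longrightarrow> payoff_rel (Node p d sd sr) f"
| "payoff_rel sr f \<Longrightarrow> payoff_rel (Node p r sd sr) f"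

definition payoff :: "strat \<Rightarrow> payoff_fun option" where
  "payoff s = (if (\<exists>f. payoff_rel s f) then Some (THE f. payoff_rel s f) else None)"

inductive conv :: "strat \<Rightarrow> bool" where
  "conv (Leaf f)"
| "conv sd \<Longrightarrow> conv (Node p d sd sr)"
| "conv sr \<Longrightarrow> conv (Node p r sd sr)"

coinductive sconv :: "strat \<Rightarrow> bool" where
  "sconv (Leaf f)"
| "conv (Node p c sd sr) \<Longrightarrow> sconv sd \<Longrightarrow> sconv sr \<Longrightarrow> sconv (Node p c sd sr)"

coinductive always :: "(strat \<Rightarrow> bool) \<Rightarrow> strat \<Rightarrow> bool" for \<Phi> where
  "\<Phi> (Leaf f) \<Longrightarrow> always \<Phi> (Leaf f)"
| "\<Phi> (Node p c sd sr) \<Longrightarrow> always \<Phi> sd \<Longrightarrow> always \<Phi> sr \<Longrightarrow> always \<Phi> (Node p c sd sr)"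

definition PE :: "strat \<Rightarrow> bool" where
  "PE s \<longleftrightarrow> sconv s
     \<and> (\<forall>p sd sr. s = Node p d sd sr \<longrightarrow> the (payoff sd) p \<ge> the (payoff sr) p)
     \<and> (\<forall>p sd sr. s = Node p r sd sr \<longrightarrow> the (payoff sr) p \<ge> the (payoff sd) p)"

definition SPE :: "strat \<Rightarrow> bool" where
  "SPE = always PE"

inductive convertible :: "agent \<Rightarrow> strat \<Rightarrow> strat \<Rightarrow> bool" for p where
  conv_bisim: "bisim s s' \<Longrightarrow> convertible p s s'"
| conv_own: "convertible p s1 s1' \<Longrightarrow> convertible p s2 s2' \<Longrightarrow>
     convertible p (Node p c s1 s2) (Node p c' s1' s2')"
| conv_other: "convertible p s1 s1' \<Longrightarrow> convertible p s2 s2' \<Longrightarrow>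
     convertible p (Node p' c s1 s2) (Node p' c s1' s2')"

definition Nash :: "strat \<Rightarrow> bool" where
  "Nash s \<longleftrightarrow> (\<forall>p s'. convertible p s s' \<longrightarrow>
      payoff s \<noteq> None \<and> payoff s' \<noteq> None \<and> the (payoff s) p \<ge> the (payoff s') p)"

end

theory Submission
  imports Defs
begin

text \<open>Bisimilar profiles are
  equal, so the base case only needs that a subgame perfect equilibrium converges.  At a node
  of another agent the choice is unchanged and the induction hypothesis for the chosen subtree
  carries over.  At a node of p itself, p may switch to either subtree; the induction hypothesis
  bounds p's payoff there by p's payoff in the corresponding subgame of s, and the local
  equilibrium condition \<open>PE\<close> says that p's payoff in s dominates both subgames.\<close>

lemma bisim_imp_eq: "bisim s s' \<Longrightarrow> s = s'"
proof (coinduction arbitrary: s s' rule: strat.coinduct)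
  case (Eq_strat s s')
  then show ?case by (cases rule: bisim.cases) auto
qed

inductive_cases payoff_rel_LeafE: "payoff_rel (Leaf f) g"
inductive_cases payoff_rel_Node_dE: "payoff_rel (Node p d s1 s2) g"
inductive_cases payoff_rel_Node_rE: "payoff_rel (Node p r s1 s2) g"

lemma payoff_rel_functional: "payoff_rel s f \<Longrightarrow> payoff_rel s g \<Longrightarrow> f = g"
  by (induction arbitrary: g rule: payoff_rel.induct)
    (blast elim: payoff_rel_LeafE payoff_rel_Node_dE payoff_rel_Node_rE)+

lemma payoff_eq_SomeI: "payoff_rel s f \<Longrightarrow> payoff s = Some f"
  unfolding payoff_def using payoff_rel_functional by (auto intro: the_equality)

lemma payoff_Node_d [simp]: "payoff (Node p d s1 s2) = payoff s1"
proof -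
  have "payoff_rel (Node p d s1 s2) = payoff_rel s1"
    by (blast elim: payoff_rel_Node_dE intro: payoff_rel.intros)
  then show ?thesis unfolding payoff_def by simp
qed

lemma payoff_Node_r [simp]: "payoff (Node p r s1 s2) = payoff s2"
proof -
  have "payoff_rel (Node p r s1 s2) = payoff_rel s2"
    by (blast elim: payoff_rel_Node_rE intro: payoff_rel.intros)
  then show ?thesis unfolding payoff_def by simp
qed

lemma conv_imp_payoff_defined: "conv s \<Longrightarrow> payoff s \<noteq> None"
  by (induction rule: conv.induct) (auto intro: payoff_eq_SomeI payoff_rel.intros)

lemma sconv_imp_conv: "sconv s \<Longrightarrow> conv s"
  by (cases rule: sconv.cases) (auto intro: conv.intros)

lemma SPE_imp_payoff_defined: "SPE s \<Longrightarrow> payoff s \<noteq> None"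
  unfolding SPE_def
  by (metis always.cases PE_def sconv_imp_conv conv_imp_payoff_defined)

lemma SPE_NodeD:
  assumes "SPE (Node p c s1 s2)"
  shows "PE (Node p c s1 s2)" and "SPE s1" and "SPE s2"
  using assms unfolding SPE_def by (auto elim: always.cases)

lemma PE_Node_subgame_payoff_le:
  assumes "PE (Node p c s1 s2)"
  shows "the (payoff s1) p \<le> the (payoff (Node p c s1 s2)) p"
    and "the (payoff s2) p \<le> the (payoff (Node p c s1 s2)) p"
  using assms unfolding PE_def by (cases c; simp)+

lemma SPE_convertible_payoff_le:
  assumes "convertible p s s'" and "SPE s"
  shows "payoff s' \<noteq> None \<and> the (payoff s') p \<le> the (payoff s) p"
  using assms
proof (induction rule: convertible.induct)
  case (conv_bisim s s')
  then show ?case using bisim_imp_eq SPE_imp_payoff_defined by blast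
next
  case (conv_own s1 s1' s2 s2' c c')
  note SPE_subgames = SPE_NodeD[OF conv_own.prems]
  have IH1: "payoff s1' \<noteq> None \<and> the (payoff s1') p \<le> the (payoff s1) p"
    and IH2: "payoff s2' \<noteq> None \<and> the (payoff s2') p \<le> the (payoff s2) p"
    using conv_own.IH SPE_subgames(2,3) by auto
  note dominates = PE_Node_subgame_payoff_le[OF SPE_subgames(1)]
  show ?case
    using IH1 IH2 dominates by (cases c') auto
next
  case (conv_other s1 s1' s2 s2' p' c)
  note SPE_subgames = SPE_NodeD[OF conv_other.prems]
  show ?case
    using conv_other.IH SPE_subgames(2,3) by (cases c) auto
qed

theorem mainTheorem13:
  fixes s :: strat
  shows "SPE s \<Longrightarrow> Nash s"
  unfolding Nash_def
  using SPE_convertible_payoff_le SPE_imp_payoff_defined by blast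

end
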